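(* Let $r>0$ and let $(X_t)_{t\ge0}$ be the Brownian motion with drift $X_t = X_0+B_t-rt$ ($B$ a standard Brownian motion started at $0$ independent of $X_0$), with $\tau_0:=\inf\{t\ge0:X_t=0\}$. If $\mu$ is a probability measure on $(0,+\infty)$ such that $\int_0^\infty x^3e^{rx}\mu(dx)<+\infty$, then for any $s\ge0$, $$\mathbb{E}_\mu\big[X_s^3e^{rX_s}\mid\tau_0>s\big]<+\infty.$$
   Context: $\mathbb{E}_\mu$ denotes expectation when $X_0\sim\mu$, and $\mathbb{E}_\mu[Z\mid\tau_0>s]=\mathbb{E}_\mu[Z\mathbf{1}_{\tau_0>s}]/\mathbb{P}_\mu(\tau_0>s)$. *)

theory Defs
  imports "HOL-Probability.Probability"
begin

definition standard_BM :: "'a measure \<Rightarrow> (real \<Rightarrow> 'a \<Rightarrow> real) \<Rightarrow> bool" where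
  "standard_BM M B \<longleftrightarrow>
     prob_space M \<and>
     (\<forall>t. B t \<in> borel_measurable M) \<and>
     (\<forall>\<omega>\<in>space M. B 0 \<omega> = 0) \<and>
     (\<forall>\<omega>\<in>space M. continuous_on {0..} (\<lambda>t. B t \<omega>)) \<and>
     (\<forall>s t. 0 \<le> s \<and> s < t \<longrightarrow>
        distributed M lborel (\<lambda>\<omega>. B t \<omega> - B s \<omega>) (normal_density 0 (sqrt (t - s)))) \<and>
     (\<forall>(n::nat) (ts::nat \<Rightarrow> real). 0 \<le> ts 0 \<and> (\<forall>i<n. ts i \<le> ts (Suc i)) \<longrightarrow>
        prob_space.indep_vars M (\<lambda>_. borel) (\<lambda>i \<omega>. B (ts (Suc i)) \<omega> - B (ts i) \<omega>) {..<n})"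

text \<open>Hitting time of 0 (value \<infinity> if 0 is never hit).\<close>
definition hit0 :: "(real \<Rightarrow> 'a \<Rightarrow> real) \<Rightarrow> 'a \<Rightarrow> ereal" where
  "hit0 X \<omega> = Inf (ereal ` {t. 0 \<le> t \<and> X t \<omega> = 0})"

end

theory Submission
  imports Defs
begin

text \<open>
  Only the positive part of X_s enters, and X_s <= a + b with a = max X_0 0 and b = |B_s|.
  Since (a + b)^3 e^(r (a + b)) <= 4 (1 + a^3) e^(r a) (1 + b^3) e^(r b) and X_0 is independent
  of B, the unconditioned expectation of X_s^3 e^(r X_s) is bounded by a product of
  E[(1 + a^3) e^(r a)], finite by the moment hypothesis on mu, and E[(1 + b^3) e^(r b)], finite
  because the Gaussian variable B_s has exponential moments of every order. Restricting to the
  event tau_0 > s, which is measurable by path continuity, and dividing by its probability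
  keeps the value finite.
\<close>

lemma hit0_gt_iff:
  fixes X :: "real \<Rightarrow> 'a \<Rightarrow> real"
  assumes cont: "continuous_on {0..} (\<lambda>t. X t \<omega>)" and "s \<ge> 0"
  shows "hit0 X \<omega> > ereal s \<longleftrightarrow> (\<forall>t\<in>{0..s}. X t \<omega> \<noteq> 0)"
proof -
  define Z where "Z = {t. 0 \<le> t \<and> X t \<omega> = 0}"
  have hit0_Z: "hit0 X \<omega> = Inf (ereal ` Z)"
    by (simp add: hit0_def Z_def)
  show ?thesis
  proof (cases "Z = {}")
    case True
    then have "hit0 X \<omega> = \<top>"
      by (simp add: hit0_Z)
    with True show ?thesis
      unfolding Z_def by (auto simp: top_ereal_def)
  next
    case False
    have "closed Z"
      using continuous_closed_preimage_constant[OF cont closed_atLeast, of 0]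
      by (simp add: Z_def atLeast_def)
    moreover have "bdd_below Z"
      by (auto simp: Z_def bdd_below_def)
    ultimately have "Inf Z \<in> Z" "hit0 X \<omega> = ereal (Inf Z)"
      using False closed_contains_Inf ereal_Inf' by (auto simp: hit0_Z image_image)
    then show ?thesis
      using \<open>bdd_below Z\<close> cInf_lower[of _ Z] by (force simp: Z_def)
  qed
qed

lemma continuous_on_Icc_nonzero_iff_Rats:
  fixes f :: "real \<Rightarrow> real"
  assumes cont: "continuous_on {a..b} f" and "a \<le> b"
  shows "(\<forall>t\<in>{a..b}. f t \<noteq> 0) \<longleftrightarrow> (\<exists>n>0. \<forall>q\<in>\<rat>. inverse (real n) \<le> \<bar>f (max a (min b q))\<bar>)"
proof
  assume nonzero: "\<forall>t\<in>{a..b}. f t \<noteq> 0"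
  obtain t0 where t0: "t0 \<in> {a..b}" "\<forall>t\<in>{a..b}. \<bar>f t0\<bar> \<le> \<bar>f t\<bar>"
    using continuous_attains_inf[OF compact_Icc _ continuous_on_rabs[OF cont]] \<open>a \<le> b\<close> by auto
  then obtain n :: nat where "n > 0" "inverse (real n) < \<bar>f t0\<bar>"
    using ex_inverse_of_nat_less[of "\<bar>f t0\<bar>"] nonzero by auto
  moreover have "max a (min b q) \<in> {a..b}" for q
    using \<open>a \<le> b\<close> by auto
  ultimately show "\<exists>n>0. \<forall>q\<in>\<rat>. inverse (real n) \<le> \<bar>f (max a (min b q))\<bar>"
    using t0(2) by (meson less_imp_le order_trans)
next
  assume "\<exists>n>0. \<forall>q\<in>\<rat>. inverse (real n) \<le> \<bar>f (max a (min b q))\<bar>"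
  then obtain n :: nat where "n > 0" and bound: "\<forall>q\<in>\<rat>. inverse (real n) \<le> \<bar>f (max a (min b q))\<bar>"
    by blast
  \<comment> \<open>Clamping to [a, b] extends f continuously to all of the real line, where \<rat> is dense.\<close>
  have "continuous_on (closure \<rat>) (\<lambda>t. \<bar>f (max a (min b t))\<bar>)"
    by (intro continuous_on_rabs continuous_on_compose2[OF cont] continuous_intros)
       (use \<open>a \<le> b\<close> in auto)
  then have lower: "inverse (real n) \<le> \<bar>f (max a (min b t))\<bar>" for t
    by (rule continuous_ge_on_closure) (simp_all add: bound Rats_closure_real)
  show "\<forall>t\<in>{a..b}. f t \<noteq> 0"
  proof
    fix t assume "t \<in> {a..b}"
    then have "inverse (real n) \<le> \<bar>f t\<bar>"
      using lower[of t] by simp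
    with \<open>n > 0\<close> show "f t \<noteq> 0"
      by auto
  qed
qed

lemma sets_Collect_nonzero_on_Icc:
  fixes X :: "real \<Rightarrow> 'a \<Rightarrow> real"
  assumes [measurable]: "\<And>t. X t \<in> borel_measurable M"
    and cont: "\<And>\<omega>. \<omega> \<in> space M \<Longrightarrow> continuous_on {a..b} (\<lambda>t. X t \<omega>)" and "a \<le> b"
  shows "{\<omega>\<in>space M. \<forall>t\<in>{a..b}. X t \<omega> \<noteq> 0} \<in> sets M"
proof -
  have "{\<omega>\<in>space M. \<forall>t\<in>{a..b}. X t \<omega> \<noteq> 0} =
      {\<omega>\<in>space M. \<exists>n>0. \<forall>q\<in>\<rat>. inverse (real n) \<le> \<bar>X (max a (min b q)) \<omega>\<bar>}"
    using continuous_on_Icc_nonzero_iff_Rats[OF cont \<open>a \<le> b\<close>] by auto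
  also have "\<dots> \<in> sets M"
    by (intro sets.sets_Collect_countable_Ex sets.sets_Collect_conj sets.sets_Collect_const
        sets.sets_Collect_countable_All' countable_rat) measurable
  finally show ?thesis .
qed

lemma sets_hit0_gt:
  fixes X :: "real \<Rightarrow> 'a \<Rightarrow> real"
  assumes "\<And>t. X t \<in> borel_measurable M"
    and cont: "\<And>\<omega>. \<omega> \<in> space M \<Longrightarrow> continuous_on {0..} (\<lambda>t. X t \<omega>)" and "s \<ge> 0"
  shows "{\<omega> \<in> space M. hit0 X \<omega> > ereal s} \<in> sets M"
proof -
  have "hit0 X \<omega> > ereal s \<longleftrightarrow> (\<forall>t\<in>{0..s}. X t \<omega> \<noteq> 0)" if "\<omega> \<in> space M" for \<omega>
    using hit0_gt_iff[where X=X, OF cont[OF that] \<open>s \<ge> 0\<close>] .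
  then have "{\<omega> \<in> space M. hit0 X \<omega> > ereal s} = {\<omega> \<in> space M. \<forall>t\<in>{0..s}. X t \<omega> \<noteq> 0}"
    by auto
  also have "\<dots> \<in> sets M"
    using assms by (intro sets_Collect_nonzero_on_Icc continuous_on_subset[OF cont]) auto
  finally show ?thesis .
qed

lemma cube_add_le:
  fixes a b :: real
  assumes "0 \<le> a" "0 \<le> b"
  shows "(a + b) ^ 3 \<le> 4 * (a ^ 3 + b ^ 3)"
proof -
  have "4 * (a ^ 3 + b ^ 3) - (a + b) ^ 3 = 3 * (a + b) * (a - b)\<^sup>2"
    by (simp add: power2_eq_square power3_eq_cube algebra_simps)
  also have "\<dots> \<ge> 0"
    using assms by simp
  finally show ?thesis
    by simp
qed

lemma cube_mult_exp_le_of_le_add: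
  fixes r a b u :: real
  assumes "0 \<le> r" "0 \<le> a" "0 \<le> b" "u \<le> a + b"
  shows "u ^ 3 * exp (r * u) \<le> 4 * ((1 + a ^ 3) * exp (r * a)) * ((1 + b ^ 3) * exp (r * b))"
proof (cases "u \<le> 0")
  case True
  then have "u ^ 3 * exp (r * u) \<le> 0"
    by (simp add: mult_nonpos_nonneg power_le_zero_eq)
  also have "0 \<le> 4 * ((1 + a ^ 3) * exp (r * a)) * ((1 + b ^ 3) * exp (r * b))"
    using assms by simp
  finally show ?thesis .
next
  case False
  have "u ^ 3 * exp (r * u) \<le> (a + b) ^ 3 * exp (r * (a + b))"
    using False assms by (intro mult_mono power_mono) (auto simp: mult_left_mono)
  also have "\<dots> \<le> 4 * (a ^ 3 + b ^ 3) * exp (r * (a + b))"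
    using assms by (intro mult_right_mono cube_add_le) auto
  also have "\<dots> \<le> 4 * ((1 + a ^ 3) * (1 + b ^ 3)) * exp (r * (a + b))"
    using assms by (intro mult_right_mono mult_left_mono) (auto simp: algebra_simps)
  also have "\<dots> = 4 * ((1 + a ^ 3) * exp (r * a)) * ((1 + b ^ 3) * exp (r * b))"
    by (simp add: exp_add algebra_simps)
  finally show ?thesis .
qed

lemma one_add_cube_mult_exp_le:
  fixes r a :: real
  assumes "0 \<le> r" "0 \<le> a"
  shows "(1 + a ^ 3) * exp (r * a) \<le> 2 * exp r + 2 * (a ^ 3 * exp (r * a))"
proof (cases "a \<le> 1")
  case True
  have "(1 + a ^ 3) * exp (r * a) \<le> 2 * exp r"
    using True assms by (intro mult_mono) (auto simp: power_le_one mult_left_le)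
  moreover have "0 \<le> a ^ 3 * exp (r * a)"
    using assms by simp
  ultimately show ?thesis
    by linarith
next
  case False
  then have "1 \<le> a ^ 3"
    by (simp add: one_le_power)
  then show ?thesis
    by (simp add: algebra_simps add_increasing)
qed

lemma cube_le_exp:
  fixes r x :: real
  assumes "0 < r" "0 \<le> x"
  shows "x ^ 3 \<le> 27 / r ^ 3 * exp (r * x)"
proof -
  have "r * x / 3 \<le> exp (r * x / 3)"
    using exp_ge_add_one_self[of "r * x / 3"] by linarith
  then have "(r * x / 3) ^ 3 \<le> exp (r * x / 3) ^ 3"
    using assms by (intro power_mono) auto
  also have "exp (r * x / 3) ^ 3 = exp (r * x)"
    by (simp flip: exp_of_nat_mult)
  finally show ?thesis
    using assms by (simp add: field_simps power_mult_distrib)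
qed

lemma exp_mult_abs_le:
  fixes c y :: real
  assumes "0 \<le> c"
  shows "exp (c * \<bar>y\<bar>) \<le> exp (c * y) + exp (- c * y)"
  using assms by (cases "y \<ge> 0") (auto simp: add_increasing add_increasing2)

lemma one_add_cube_abs_mult_exp_le:
  fixes r y :: real
  assumes "0 < r"
  shows "(1 + \<bar>y\<bar> ^ 3) * exp (r * \<bar>y\<bar>) \<le> (1 + 27 / r ^ 3) * (exp (2 * r * y) + exp (- (2 * r) * y))"
proof -
  have "1 + \<bar>y\<bar> ^ 3 \<le> (1 + 27 / r ^ 3) * exp (r * \<bar>y\<bar>)"
    using cube_le_exp[OF assms, of "\<bar>y\<bar>"] assms by (simp add: algebra_simps add_mono)
  then have "(1 + \<bar>y\<bar> ^ 3) * exp (r * \<bar>y\<bar>) \<le> (1 + 27 / r ^ 3) * exp (r * \<bar>y\<bar>) * exp (r * \<bar>y\<bar>)"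
    by (rule mult_right_mono) simp
  also have "\<dots> = (1 + 27 / r ^ 3) * exp (2 * r * \<bar>y\<bar>)"
    by (metis exp_add mult_2 mult.assoc)
  also have "\<dots> \<le> (1 + 27 / r ^ 3) * (exp (2 * r * y) + exp (- (2 * r) * y))"
    using assms exp_mult_abs_le[of "2 * r" y] by (intro mult_left_mono) auto
  finally show ?thesis .
qed

lemma normal_density_mult_exp:
  assumes "\<sigma> > 0"
  shows "normal_density \<mu> \<sigma> y * exp (c * y) =
    exp (c * \<mu> + c\<^sup>2 * \<sigma>\<^sup>2 / 2) * normal_density (\<mu> + c * \<sigma>\<^sup>2) \<sigma> y"
proof -
  have "- (y - \<mu>)\<^sup>2 / (2 * \<sigma>\<^sup>2) + c * y = c * \<mu> + c\<^sup>2 * \<sigma>\<^sup>2 / 2 + - (y - (\<mu> + c * \<sigma>\<^sup>2))\<^sup>2 / (2 * \<sigma>\<^sup>2)"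
    using assms by (simp add: field_simps power2_eq_square)
  then show ?thesis
    unfolding normal_density_def by (simp add: mult_exp_exp)
qed

lemma nn_integral_exp_normal:
  assumes "distributed M lborel Y (normal_density \<mu> \<sigma>)" and "\<sigma> > 0"
  shows "(\<integral>\<^sup>+\<omega>. exp (c * Y \<omega>) \<partial>M) = exp (c * \<mu> + c\<^sup>2 * \<sigma>\<^sup>2 / 2)"
proof -
  have "(\<integral>\<^sup>+\<omega>. exp (c * Y \<omega>) \<partial>M) = (\<integral>\<^sup>+y. normal_density \<mu> \<sigma> y * exp (c * y) \<partial>lborel)"
    using distributed_nn_integral[OF assms(1), of "\<lambda>y. exp (c * y)"] by (simp add: ennreal_mult)
  also have "\<dots> = (\<integral>\<^sup>+y. exp (c * \<mu> + c\<^sup>2 * \<sigma>\<^sup>2 / 2) * ennreal (normal_density (\<mu> + c * \<sigma>\<^sup>2) \<sigma> y) \<partial>lborel)"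
    by (simp only: normal_density_mult_exp[OF assms(2)] ennreal_mult exp_ge_zero normal_density_nonneg)
  also have "\<dots> = exp (c * \<mu> + c\<^sup>2 * \<sigma>\<^sup>2 / 2) * (\<integral>\<^sup>+y. normal_density (\<mu> + c * \<sigma>\<^sup>2) \<sigma> y \<partial>lborel)"
    by (rule nn_integral_cmult) simp
  also have "(\<integral>\<^sup>+y. normal_density (\<mu> + c * \<sigma>\<^sup>2) \<sigma> y \<partial>lborel) = 1"
    using assms(2) by (subst nn_integral_eq_integral) (auto simp: integral_normal_density)
  finally show ?thesis
    by simp
qed

lemma standard_BMD:
  assumes "standard_BM M B"
  shows "prob_space M" and "B t \<in> borel_measurable M" and "\<omega> \<in> space M \<Longrightarrow> B 0 \<omega> = 0"
    and "\<omega> \<in> space M \<Longrightarrow> continuous_on {0..} (\<lambda>t. B t \<omega>)"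
    and "0 \<le> u \<Longrightarrow> u < t \<Longrightarrow>
      distributed M lborel (\<lambda>\<omega>. B t \<omega> - B u \<omega>) (normal_density 0 (sqrt (t - u)))"
  using assms unfolding standard_BM_def by blast+

lemma standard_BM_nn_integral_exp:
  assumes BM: "standard_BM M B" and "s \<ge> 0"
  shows "(\<integral>\<^sup>+\<omega>. exp (c * B s \<omega>) \<partial>M) = exp (c\<^sup>2 * s / 2)"
proof -
  have "(\<integral>\<^sup>+\<omega>. exp (c * B s \<omega>) \<partial>M) = (\<integral>\<^sup>+\<omega>. exp (c * (B s \<omega> - B 0 \<omega>)) \<partial>M)"
    by (intro nn_integral_cong) (simp add: standard_BMD(3)[OF BM])
  also have "\<dots> = exp (c\<^sup>2 * s / 2)"
  proof (cases "s = 0")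
    case True
    then show ?thesis
      using prob_space.emeasure_space_1[OF standard_BMD(1)[OF BM]] by simp
  next
    case False
    with \<open>s \<ge> 0\<close> show ?thesis
      using nn_integral_exp_normal[OF standard_BMD(5)[OF BM order_refl], of s c] by simp
  qed
  finally show ?thesis .
qed

lemma standard_BM_nn_integral_one_add_cube_abs_mult_exp_finite:
  assumes BM: "standard_BM M B" and "s \<ge> 0" and "r > 0"
  shows "(\<integral>\<^sup>+\<omega>. ennreal ((1 + \<bar>B s \<omega>\<bar> ^ 3) * exp (r * \<bar>B s \<omega>\<bar>)) \<partial>M) < \<infinity>"
proof -
  note [measurable] = standard_BMD(2)[OF BM]
  define C where "C = 1 + 27 / r ^ 3"
  have "(\<integral>\<^sup>+\<omega>. ennreal ((1 + \<bar>B s \<omega>\<bar> ^ 3) * exp (r * \<bar>B s \<omega>\<bar>)) \<partial>M)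
      \<le> (\<integral>\<^sup>+\<omega>. ennreal C * (ennreal (exp (2 * r * B s \<omega>)) + ennreal (exp (- (2 * r) * B s \<omega>))) \<partial>M)"
  proof (rule nn_integral_mono)
    fix \<omega>
    have "ennreal ((1 + \<bar>B s \<omega>\<bar> ^ 3) * exp (r * \<bar>B s \<omega>\<bar>))
        \<le> ennreal (C * (exp (2 * r * B s \<omega>) + exp (- (2 * r) * B s \<omega>)))"
      unfolding C_def by (intro ennreal_leI one_add_cube_abs_mult_exp_le \<open>r > 0\<close>)
    also have "\<dots> = ennreal C * (ennreal (exp (2 * r * B s \<omega>)) + ennreal (exp (- (2 * r) * B s \<omega>)))"
      using \<open>r > 0\<close> by (simp add: C_def ennreal_mult)
    finally show "ennreal ((1 + \<bar>B s \<omega>\<bar> ^ 3) * exp (r * \<bar>B s \<omega>\<bar>))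
        \<le> ennreal C * (ennreal (exp (2 * r * B s \<omega>)) + ennreal (exp (- (2 * r) * B s \<omega>)))" .
  qed
  also have "\<dots> = ennreal C * ((\<integral>\<^sup>+\<omega>. exp (2 * r * B s \<omega>) \<partial>M) + (\<integral>\<^sup>+\<omega>. exp (- (2 * r) * B s \<omega>) \<partial>M))"
    by (simp add: nn_integral_cmult nn_integral_add)
  also have "\<dots> < \<infinity>"
    using standard_BM_nn_integral_exp[OF BM \<open>s \<ge> 0\<close>, of "2 * r"]
      standard_BM_nn_integral_exp[OF BM \<open>s \<ge> 0\<close>, of "- (2 * r)"]
    by (simp add: ennreal_mult_less_top)
  finally show ?thesis .
qed

lemma (in prob_space) indep_var_of_indep_set_process:
  assumes indep: "indep_set {X -` A \<inter> space M | A. A \<in> sets N}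
      (sigma_sets (space M) (\<Union>t. {Y t -` A \<inter> space M | A. A \<in> sets (N' t)}))"
    and "random_variable N X" "random_variable (N' t) (Y t)"
  shows "indep_var N X (N' t) (Y t)"
  unfolding indep_var_def indep_vars_def2
proof (intro conjI ballI)
  show "indep_sets (\<lambda>i. {case_bool X (Y t) i -` A \<inter> space M | A. A \<in> sets (case_bool N (N' t) i)}) UNIV"
    using indep unfolding indep_set_def
    by (rule indep_sets_mono_sets) (auto split: bool.split intro: sigma_sets.Basic)
qed (use assms in \<open>auto split: bool.split\<close>)

lemma (in prob_space) indep_var_nn_integral_mult:
  assumes "indep_var N X N' Y"
    and [measurable]: "f \<in> borel_measurable N" "g \<in> borel_measurable N'"
  shows "(\<integral>\<^sup>+\<omega>. f (X \<omega>) * g (Y \<omega>) \<partial>M) = (\<integral>\<^sup>+\<omega>. f (X \<omega>) \<partial>M) * (\<integral>\<^sup>+\<omega>. g (Y \<omega>) \<partial>M)"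
proof -
  have "indep_var borel (f \<circ> X) borel (g \<circ> Y)"
    using assms by (rule indep_var_compose)
  then have "indep_vars (\<lambda>_. borel) (case_bool (f \<circ> X) (g \<circ> Y)) UNIV"
    unfolding indep_var_def by (rule indep_vars_cong[THEN iffD1, rotated -1]) (auto split: bool.split)
  then have "(\<integral>\<^sup>+\<omega>. (\<Prod>i\<in>UNIV. case_bool (f \<circ> X) (g \<circ> Y) i \<omega>) \<partial>M) =
      (\<Prod>i\<in>UNIV. \<integral>\<^sup>+\<omega>. case_bool (f \<circ> X) (g \<circ> Y) i \<omega> \<partial>M)"
    by (intro indep_vars_nn_integral) auto
  then show ?thesis
    by (simp add: UNIV_bool mult.commute comp_def)
qed

lemma (in prob_space) nn_integral_one_add_cube_mult_exp_finite:
  fixes Y :: "'a \<Rightarrow> real"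
  assumes [measurable]: "Y \<in> borel_measurable M" and "\<And>\<omega>. 0 \<le> Y \<omega>" and "0 \<le> r"
    and finite: "(\<integral>\<^sup>+\<omega>. ennreal (Y \<omega> ^ 3 * exp (r * Y \<omega>)) \<partial>M) < \<infinity>"
  shows "(\<integral>\<^sup>+\<omega>. ennreal ((1 + Y \<omega> ^ 3) * exp (r * Y \<omega>)) \<partial>M) < \<infinity>"
proof -
  have "(\<integral>\<^sup>+\<omega>. ennreal ((1 + Y \<omega> ^ 3) * exp (r * Y \<omega>)) \<partial>M)
      \<le> (\<integral>\<^sup>+\<omega>. ennreal (2 * exp r) + 2 * ennreal (Y \<omega> ^ 3 * exp (r * Y \<omega>)) \<partial>M)"
  proof (rule nn_integral_mono)
    fix \<omega>
    have "ennreal ((1 + Y \<omega> ^ 3) * exp (r * Y \<omega>)) \<le> ennreal (2 * exp r + 2 * (Y \<omega> ^ 3 * exp (r * Y \<omega>)))"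
      using assms by (intro ennreal_leI one_add_cube_mult_exp_le) auto
    also have "\<dots> = ennreal (2 * exp r) + 2 * ennreal (Y \<omega> ^ 3 * exp (r * Y \<omega>))"
      using assms by (simp add: ennreal_mult)
    finally show "ennreal ((1 + Y \<omega> ^ 3) * exp (r * Y \<omega>)) \<le> ennreal (2 * exp r) + 2 * ennreal (Y \<omega> ^ 3 * exp (r * Y \<omega>))" .
  qed
  also have "\<dots> = ennreal (2 * exp r) + 2 * (\<integral>\<^sup>+\<omega>. ennreal (Y \<omega> ^ 3 * exp (r * Y \<omega>)) \<partial>M)"
    by (simp add: nn_integral_add nn_integral_cmult emeasure_space_1)
  also have "\<dots> < \<infinity>"
    using finite by (simp add: ennreal_mult_less_top)
  finally show ?thesis .
qed

lemma nn_integral_indicator_divide_emeasure_less_top: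
  assumes "A \<in> sets M" and "(\<integral>\<^sup>+\<omega>. f \<omega> * indicator A \<omega> \<partial>M) < \<infinity>"
  shows "(\<integral>\<^sup>+\<omega>. f \<omega> * indicator A \<omega> \<partial>M) / emeasure M A < \<infinity>"
proof (cases "emeasure M A = 0")
  case True
  \<comment> \<open>Then the quotient is 0 / 0, which is 0 in ennreal.\<close>
  with assms(1) have "(\<integral>\<^sup>+\<omega>. f \<omega> * indicator A \<omega> \<partial>M) = 0"
    by (intro nn_integral_null_set) (simp add: null_sets_def)
  then show ?thesis
    by simp
next
  case False
  with assms(2) show ?thesis
    by (simp add: ennreal_divide_eq_top_iff flip: less_top)
qed

lemma drifted_BM_nn_integral_cube_mult_exp_finite:
  fixes X0 :: "'a \<Rightarrow> real"
  assumes "r > 0" and BM: "standard_BM M B" and [measurable]: "X0 \<in> borel_measurable M"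
    and indep: "prob_space.indep_set M
                    {X0 -` A \<inter> space M | A. A \<in> sets borel}
                    (sigma_sets (space M) (\<Union>t. {B t -` A \<inter> space M | A. A \<in> sets borel}))"
    and moment: "(\<integral>\<^sup>+\<omega>. ennreal (max (X0 \<omega>) 0 ^ 3 * exp (r * max (X0 \<omega>) 0)) \<partial>M) < \<infinity>"
    and "s \<ge> 0"
  shows "(\<integral>\<^sup>+\<omega>. ennreal ((X0 \<omega> + B s \<omega> - r * s) ^ 3 * exp (r * (X0 \<omega> + B s \<omega> - r * s))) \<partial>M) < \<infinity>"
proof -
  interpret prob_space M
    using standard_BMD(1)[OF BM] .
  note [measurable] = standard_BMD(2)[OF BM]
  define F where "F = (\<lambda>x. ennreal ((1 + max x 0 ^ 3) * exp (r * max x 0)))"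
  define H where "H = (\<lambda>y. ennreal ((1 + \<bar>y\<bar> ^ 3) * exp (r * \<bar>y\<bar>)))"
  have F_meas[measurable]: "F \<in> borel_measurable borel"
    unfolding F_def by measurable
  have H_meas[measurable]: "H \<in> borel_measurable borel"
    unfolding H_def by measurable
  have "(\<integral>\<^sup>+\<omega>. ennreal ((X0 \<omega> + B s \<omega> - r * s) ^ 3 * exp (r * (X0 \<omega> + B s \<omega> - r * s))) \<partial>M)
      \<le> (\<integral>\<^sup>+\<omega>. 4 * (F (X0 \<omega>) * H (B s \<omega>)) \<partial>M)"
  proof (rule nn_integral_mono)
    fix \<omega>
    have "0 \<le> r * s"
      using \<open>r > 0\<close> \<open>s \<ge> 0\<close> by simp
    then have "X0 \<omega> + B s \<omega> - r * s \<le> max (X0 \<omega>) 0 + \<bar>B s \<omega>\<bar>"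
      by linarith
    then have "ennreal ((X0 \<omega> + B s \<omega> - r * s) ^ 3 * exp (r * (X0 \<omega> + B s \<omega> - r * s)))
        \<le> ennreal (4 * ((1 + max (X0 \<omega>) 0 ^ 3) * exp (r * max (X0 \<omega>) 0))
                    * ((1 + \<bar>B s \<omega>\<bar> ^ 3) * exp (r * \<bar>B s \<omega>\<bar>)))"
      using \<open>r > 0\<close> by (intro ennreal_leI cube_mult_exp_le_of_le_add) auto
    also have "\<dots> = 4 * (F (X0 \<omega>) * H (B s \<omega>))"
      by (simp add: F_def H_def ennreal_mult' mult.assoc)
    finally show "ennreal ((X0 \<omega> + B s \<omega> - r * s) ^ 3 * exp (r * (X0 \<omega> + B s \<omega> - r * s)))
        \<le> 4 * (F (X0 \<omega>) * H (B s \<omega>))" .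
  qed
  also have "\<dots> = 4 * ((\<integral>\<^sup>+\<omega>. F (X0 \<omega>) \<partial>M) * (\<integral>\<^sup>+\<omega>. H (B s \<omega>) \<partial>M))"
    using indep_var_nn_integral_mult[OF indep_var_of_indep_set_process[where N'="\<lambda>_. borel", OF indep]]
    by (simp add: nn_integral_cmult)
  also have "\<dots> < \<infinity>"
  proof -
    have "(\<integral>\<^sup>+\<omega>. F (X0 \<omega>) \<partial>M) < \<infinity>"
      unfolding F_def using moment \<open>r > 0\<close>
      by (intro nn_integral_one_add_cube_mult_exp_finite) auto
    moreover have "(\<integral>\<^sup>+\<omega>. H (B s \<omega>) \<partial>M) < \<infinity>"
      unfolding H_def by (rule standard_BM_nn_integral_one_add_cube_abs_mult_exp_finite[OF BM \<open>s \<ge> 0\<close> \<open>r > 0\<close>])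
    ultimately show ?thesis
      by (simp add: ennreal_mult_less_top)
  qed
  finally show ?thesis .
qed

theorem lemma4p2:
  fixes M :: "'a measure" and B :: "real \<Rightarrow> 'a \<Rightarrow> real" and X0 :: "'a \<Rightarrow> real"
    and \<mu> :: "real measure" and r s :: real
  assumes r: "r > 0"
    and BM: "standard_BM M B"
    and X0_meas: "X0 \<in> borel_measurable M"
    and indep: "prob_space.indep_set M
                    {X0 -` A \<inter> space M | A. A \<in> sets borel}
                    (sigma_sets (space M) (\<Union>t. {B t -` A \<inter> space M | A. A \<in> sets borel}))"
    and mu_prob: "prob_space \<mu>" and mu_sets: "sets \<mu> = sets borel"
    and mu_pos: "\<mu> {..0} = 0"
    and law: "distr M borel X0 = \<mu>"
    and moment: "(\<integral>\<^sup>+ x. ennreal (x ^ 3 * exp (r * x)) * indicator {0<..} x \<partial>\<mu>) < \<infinity>"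
    and s: "s \<ge> 0"
  shows "(let X = (\<lambda>t \<omega>. X0 \<omega> + B t \<omega> - r * t);
              A = {\<omega> \<in> space M. hit0 X \<omega> > ereal s}
          in (\<integral>\<^sup>+ \<omega>. ennreal (X s \<omega> ^ 3 * exp (r * X s \<omega>)) * indicator A \<omega> \<partial>M)
               / emeasure M A < \<infinity>)"
proof -
  note [measurable] = X0_meas standard_BMD(2)[OF BM]
  define X where "X = (\<lambda>t \<omega>. X0 \<omega> + B t \<omega> - r * t)"
  define A where "A = {\<omega> \<in> space M. hit0 X \<omega> > ereal s}"
  have "X t \<in> borel_measurable M" for t
    unfolding X_def by measurable
  moreover have "continuous_on {0..} (\<lambda>t. X t \<omega>)" if "\<omega> \<in> space M" for \<omega>
    unfolding X_def by (intro continuous_intros standard_BMD(4)[OF BM that])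
  ultimately have A_sets: "A \<in> sets M"
    unfolding A_def using s by (rule sets_hit0_gt)
  \<comment> \<open>Only the positive part of X0 enters the estimate.\<close>
  have "(\<integral>\<^sup>+\<omega>. ennreal (max (X0 \<omega>) 0 ^ 3 * exp (r * max (X0 \<omega>) 0)) \<partial>M)
      = (\<integral>\<^sup>+x. ennreal (max x 0 ^ 3 * exp (r * max x 0)) \<partial>\<mu>)"
    unfolding law[symmetric] by (subst nn_integral_distr) auto
  also have "\<dots> = (\<integral>\<^sup>+ x. ennreal (x ^ 3 * exp (r * x)) * indicator {0<..} x \<partial>\<mu>)"
    by (intro nn_integral_cong) (simp add: indicator_def max_def)
  finally have "(\<integral>\<^sup>+\<omega>. ennreal (X s \<omega> ^ 3 * exp (r * X s \<omega>)) \<partial>M) < \<infinity>"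
    using drifted_BM_nn_integral_cube_mult_exp_finite[OF r BM X0_meas indep _ s] moment
    by (simp add: X_def)
  then have "(\<integral>\<^sup>+\<omega>. ennreal (X s \<omega> ^ 3 * exp (r * X s \<omega>)) * indicator A \<omega> \<partial>M) < \<infinity>"
    by (rule le_less_trans[rotated]) (intro nn_integral_mono, simp add: indicator_def)
  then show ?thesis
    unfolding Let_def X_def[symmetric] A_def[symmetric]
    by (rule nn_integral_indicator_divide_emeasure_less_top[OF A_sets])
qed

end
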